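(* Let $\Omega\subset\mathbb{R}^n$ be a bounded open convex set with smooth boundary, let $\Lambda>0$, and let $u$ be a nonconstant continuous viscosity solution of $(N_\Lambda)$ normalized so that $\max_{\overline\Omega}u=\frac1\Lambda$. Then $$|x-x_0|\ge u(x)\qquad\text{for all } x\in\overline\Omega \text{ with } u(x)\ge0 \text{ and all } x_0\in\Omega \text{ with } u(x_0)\le0 .$$ Consequently $\sup_{x\in\overline{\Omega_+}}\operatorname{dist}(x,\{u=0\})\ge\frac1\Lambda$, where $\Omega_+=\{x\in\Omega:u(x)>0\}$.
   Context: $\nu$ denotes the outer unit normal to $\partial\Omega$, and $\Delta_\infty u=\sum_{i,j=1}^n u_{x_i}u_{x_ix_j}u_{x_j}$. For $\Lambda\ge 0$, problem $(N_\Lambda)$ is $$\min\{|\nabla u|-\Lambda|u|,-\Delta_\infty u\}=0 \text{ in }\{u>0\}\cap\Omega,\quad \max\{\Lambda|u|-|\nabla u|,-\Delta_\infty u\}=0 \text{ in }\{u<0\}\cap\Omega,\quad -\Delta_\infty u=0 \text{ in }\{u=0\}\cap\Omega,\quad \tfrac{\partial u}{\partial\nu}=0 \text{ on }\partial\Omega,$$ understood in the viscosity sense as follows. For $s\in\mathbb{R}$, $\xi\in\mathbb{R}^n$, $X$ a symmetric $n\times n$ matrix, let $F(s,\xi,X)=\min\{|\xi|-\Lambda|s|,-\langle X\xi,\xi\rangle\}$, $G(s,\xi,X)=\max\{\Lambda|s|-|\xi|,-\langle X\xi,\xi\rangle\}$, $H(X)=-\langle X\xi,\xi\rangle$ (evaluated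 at the same $\xi$). For a function $u$ and point $x_0$, let $E$ denote $F$ if $u(x_0)>0$, $G$ if $u(x_0)<0$, $H$ if $u(x_0)=0$. An upper semicontinuous $u$ on $\overline\Omega$ is a viscosity subsolution if: for every $x_0\in\Omega$ and $\phi\in C^2(\Omega)$ with $\phi(x_0)=u(x_0)$ and $u(x)<\phi(x)$ for $x\neq x_0$, one has $E(\phi(x_0),\nabla\phi(x_0),\nabla^2\phi(x_0))\le 0$; and for every $x_0\in\partial\Omega$ and $\phi\in C^2(\overline\Omega)$ with the same touching property, $\min\{E(\phi(x_0),\nabla\phi(x_0),\nabla^2\phi(x_0)),\frac{\partial\phi}{\partial\nu}(x_0)\}\le 0$. A lower semicontinuous $u$ is a viscosity supersolution if the same holds with $u(x)>\phi(x)$ for $x\ne x_0$, with "$E\le 0$" replaced by "$E\ge 0$" at interior points and with $\max\{E(\phi(x_0),\nabla\phi(x_0),\nabla^2\phi(x_0)),\frac{\partial\phi}{\partial\nu}(x_0)\}\ge 0$ at boundary points. A continuous $u$ is a viscosity solution if it is both a sub- and a supersolution. *)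

theory Defs
  imports "HOL-Analysis.Analysis"
begin

text \<open>C-infinity functions on an open set S (all partial derivatives of all orders exist).\<close>
coinductive smooth_fun :: "'a::euclidean_space set \<Rightarrow> ('a \<Rightarrow> real) \<Rightarrow> bool" where
  "(\<forall>x\<in>S. (f has_derivative D x) (at x)) \<Longrightarrow> (\<forall>v. smooth_fun S (\<lambda>x. D x v))
   \<Longrightarrow> smooth_fun S f"

text \<open>Bounded open set with smooth boundary, and nu is its outer unit normal:
  locally near each boundary point p, Omega = {rho < 0} for a smooth rho with nonvanishing
  gradient, and nu p = grad rho p / |grad rho p|.\<close>
definition smooth_boundary_normal :: "'a::euclidean_space set \<Rightarrow> ('a \<Rightarrow> 'a) \<Rightarrow> bool" where
  "smooth_boundary_normal \<Omega> \<nu> \<longleftrightarrow>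
     (\<forall>p\<in>frontier \<Omega>. \<exists>r>0. \<exists>\<rho> grad.
        smooth_fun (ball p r) \<rho> \<and>
        (\<forall>x\<in>ball p r. (\<rho> has_derivative (\<lambda>h. grad x \<bullet> h)) (at x) \<and> grad x \<noteq> 0) \<and>
        \<Omega> \<inter> ball p r = {x\<in>ball p r. \<rho> x < 0} \<and>
        \<nu> p = (1 / norm (grad p)) *\<^sub>R grad p)"

definition C2_on :: "'a::euclidean_space set \<Rightarrow> ('a \<Rightarrow> real) \<Rightarrow> ('a \<Rightarrow> 'a) \<Rightarrow> ('a \<Rightarrow> 'a \<Rightarrow> 'a) \<Rightarrow> bool" where
  "C2_on S \<phi> g H \<longleftrightarrow> open S \<and>
     (\<forall>x\<in>S. (\<phi> has_derivative (\<lambda>h. g x \<bullet> h)) (at x) \<and> (g has_derivative H x) (at x)) \<and>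
     (\<forall>v. continuous_on S (\<lambda>x. H x v))"

definition usc_on :: "'a::metric_space set \<Rightarrow> ('a \<Rightarrow> real) \<Rightarrow> bool" where
  "usc_on S u \<longleftrightarrow> (\<forall>x\<in>S. \<forall>e>0. \<exists>d>0. \<forall>y\<in>S. dist y x < d \<longrightarrow> u y < u x + e)"

definition lsc_on :: "'a::metric_space set \<Rightarrow> ('a \<Rightarrow> real) \<Rightarrow> bool" where
  "lsc_on S u \<longleftrightarrow> (\<forall>x\<in>S. \<forall>e>0. \<exists>d>0. \<forall>y\<in>S. dist y x < d \<longrightarrow> u y > u x - e)"

text \<open>The operator E(s, xi, X) of (N_Lambda), selected by the sign of u(x0);
  q = <X xi, xi>, with xi the gradient and X the Hessian of the test function.\<close>
definition E_op :: "real \<Rightarrow> real \<Rightarrow> real \<Rightarrow> 'a::euclidean_space \<Rightarrow> ('a \<Rightarrow> 'a) \<Rightarrow> real" where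
  "E_op \<Lambda> ux0 s \<xi> X =
     (if ux0 > 0 then min (norm \<xi> - \<Lambda> * \<bar>s\<bar>) (- (X \<xi> \<bullet> \<xi>))
      else if ux0 < 0 then max (\<Lambda> * \<bar>s\<bar> - norm \<xi>) (- (X \<xi> \<bullet> \<xi>))
      else - (X \<xi> \<bullet> \<xi>))"

definition visc_sub :: "real \<Rightarrow> 'a::euclidean_space set \<Rightarrow> ('a \<Rightarrow> 'a) \<Rightarrow> ('a \<Rightarrow> real) \<Rightarrow> bool" where
  "visc_sub \<Lambda> \<Omega> \<nu> u \<longleftrightarrow>
     usc_on (closure \<Omega>) u \<and>
     (\<forall>x0\<in>\<Omega>. \<forall>\<phi> g H. C2_on \<Omega> \<phi> g H \<and> \<phi> x0 = u x0 \<and> (\<forall>x\<in>\<Omega>-{x0}. u x < \<phi> x)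
        \<longrightarrow> E_op \<Lambda> (u x0) (\<phi> x0) (g x0) (H x0) \<le> 0) \<and>
     (\<forall>x0\<in>frontier \<Omega>. \<forall>\<phi> g H U. closure \<Omega> \<subseteq> U \<and> C2_on U \<phi> g H \<and> \<phi> x0 = u x0 \<and>
        (\<forall>x\<in>closure \<Omega>-{x0}. u x < \<phi> x)
        \<longrightarrow> min (E_op \<Lambda> (u x0) (\<phi> x0) (g x0) (H x0)) (g x0 \<bullet> \<nu> x0) \<le> 0)"

definition visc_super :: "real \<Rightarrow> 'a::euclidean_space set \<Rightarrow> ('a \<Rightarrow> 'a) \<Rightarrow> ('a \<Rightarrow> real) \<Rightarrow> bool" where
  "visc_super \<Lambda> \<Omega> \<nu> u \<longleftrightarrow>
     lsc_on (closure \<Omega>) u \<and>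
     (\<forall>x0\<in>\<Omega>. \<forall>\<phi> g H. C2_on \<Omega> \<phi> g H \<and> \<phi> x0 = u x0 \<and> (\<forall>x\<in>\<Omega>-{x0}. u x > \<phi> x)
        \<longrightarrow> E_op \<Lambda> (u x0) (\<phi> x0) (g x0) (H x0) \<ge> 0) \<and>
     (\<forall>x0\<in>frontier \<Omega>. \<forall>\<phi> g H U. closure \<Omega> \<subseteq> U \<and> C2_on U \<phi> g H \<and> \<phi> x0 = u x0 \<and>
        (\<forall>x\<in>closure \<Omega>-{x0}. u x > \<phi> x)
        \<longrightarrow> max (E_op \<Lambda> (u x0) (\<phi> x0) (g x0) (H x0)) (g x0 \<bullet> \<nu> x0) \<ge> 0)"

definition visc_solution :: "real \<Rightarrow> 'a::euclidean_space set \<Rightarrow> ('a \<Rightarrow> 'a) \<Rightarrow> ('a \<Rightarrow> real) \<Rightarrow> bool" where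
  "visc_solution \<Lambda> \<Omega> \<nu> u \<longleftrightarrow>
     continuous_on (closure \<Omega>) u \<and> visc_sub \<Lambda> \<Omega> \<nu> u \<and> visc_super \<Lambda> \<Omega> \<nu> u"

end

theory Submission
  imports Defs
begin

(* The whole argument is a comparison with explicit radial C2 test functions, using only the
   viscosity inequalities at extremum points of u - \<phi>.
   1. Test functions: radial functions F(|x - c|\<^sup>2) are C2 with explicit gradient and Hessian;
      a quartic perturbation makes extrema strict, so the viscosity inequalities hold at every
      maximum (minimum) of u - \<phi> over the closure of \<Omega>.
   2. Geometry: for a convex domain with smooth boundary, the outer normal at a boundary point
      points away from every interior point, so radial test functions have a signed normal
      derivative on the boundary.
   3. Using a Gaussian bump from below, a supersolution cannot be positive in all of \<Omega>; hence
      the nodal set {u = 0} meets \<Omega>.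
   4. Using a smoothed cone a sqrt(|x - x0|\<^sup>2 + \<eta>\<^sup>2) - b|x - x0|\<^sup>2 from above, a subsolution with
      u \<le> 1/\<Lambda> satisfies u(x) \<le> |x - x0| whenever u(x0) \<le> 0.
   The theorem follows: a maximum point of u (value 1/\<Lambda>) lies in the closure of {u > 0}, and
   by the cone estimate it has distance at least 1/\<Lambda> from the nonempty nodal set. *)

lemma C2_radial:
  fixes c :: "'a::euclidean_space"
  assumes T: "open T" and S: "open S"
    and d1: "\<And>t. t \<in> T \<Longrightarrow> (F has_real_derivative F1 t) (at t)"
    and d2: "\<And>t. t \<in> T \<Longrightarrow> (F1 has_real_derivative F2 t) (at t)"
    and c2: "continuous_on T F2"
    and ST: "\<And>x. x \<in> S \<Longrightarrow> (x - c) \<bullet> (x - c) \<in> T"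
  shows "C2_on S (\<lambda>x. F ((x - c) \<bullet> (x - c)))
     (\<lambda>x. (2 * F1 ((x - c) \<bullet> (x - c))) *\<^sub>R (x - c))
     (\<lambda>x h. (2 * F1 ((x - c) \<bullet> (x - c))) *\<^sub>R h + (4 * F2 ((x - c) \<bullet> (x - c)) * ((x - c) \<bullet> h)) *\<^sub>R (x - c))"
proof -
  let ?s = "\<lambda>x. (x - c) \<bullet> (x - c)"
  have ds: "(?s has_derivative (\<lambda>h. 2 * ((x - c) \<bullet> h))) (at x)" for x
    by (auto intro!: derivative_eq_intros simp: inner_commute)
  have grad: "((\<lambda>x. F (?s x)) has_derivative (\<lambda>h. (2 * F1 (?s x)) *\<^sub>R (x - c) \<bullet> h)) (at x)"
    if "x \<in> S" for x
    using has_derivative_compose[OF ds d1[OF ST[OF that], unfolded has_field_derivative_def]]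
    by (simp add: o_def algebra_simps)
  have hess: "((\<lambda>x. (2 * F1 (?s x)) *\<^sub>R (x - c)) has_derivative
      (\<lambda>h. (2 * F1 (?s x)) *\<^sub>R h + (4 * F2 (?s x) * ((x - c) \<bullet> h)) *\<^sub>R (x - c))) (at x)"
    if "x \<in> S" for x
  proof -
    have "((\<lambda>x. F1 (?s x)) has_derivative (\<lambda>h. F2 (?s x) * (2 * ((x - c) \<bullet> h)))) (at x)"
      using has_derivative_compose[OF ds d2[OF ST[OF that], unfolded has_field_derivative_def]]
      by (simp add: o_def mult.commute)
    then have "((\<lambda>x. (2 * F1 (?s x)) *\<^sub>R (x - c)) has_derivative
      (\<lambda>h. (2 * F1 (?s x)) *\<^sub>R h + (2 * (F2 (?s x) * (2 * ((x - c) \<bullet> h)))) *\<^sub>R (x - c))) (at x)"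
      by (auto intro!: derivative_eq_intros)
    then show ?thesis by (simp add: algebra_simps)
  qed
  have "continuous_on T F1"
    using d2 by (meson DERIV_continuous continuous_at_imp_continuous_on)
  then have "continuous_on S (\<lambda>x. F1 (?s x))" "continuous_on S (\<lambda>x. F2 (?s x))"
    using c2 ST by (auto intro!: continuous_on_compose2[of T _ S ?s] continuous_intros)
  then have "continuous_on S (\<lambda>x. (2 * F1 (?s x)) *\<^sub>R v + (4 * F2 (?s x) * ((x - c) \<bullet> v)) *\<^sub>R (x - c))"
    for v by (intro continuous_intros)
  then show ?thesis unfolding C2_on_def using S grad hess by blast
qed

lemma C2_on_continuous:
  assumes "C2_on S f g H"
  shows "continuous_on S f"
  using assms unfolding C2_on_def by (meson continuous_at_imp_continuous_on has_derivative_continuous)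

lemma C2_add:
  assumes "C2_on S f g H" "C2_on S f' g' H'"
  shows "C2_on S (\<lambda>x. f x + f' x) (\<lambda>x. g x + g' x) (\<lambda>x h. H x h + H' x h)"
  using assms unfolding C2_on_def
  by (auto intro!: derivative_eq_intros continuous_intros simp: inner_add_left)

lemma C2_add_const:
  assumes "C2_on S f g H"
  shows "C2_on S (\<lambda>x. f x + k) g H"
  using assms unfolding C2_on_def by (auto intro!: derivative_eq_intros)

lemma C2_on_subset:
  assumes "C2_on S f g H" "open T" "T \<subseteq> S"
  shows "C2_on T f g H"
  using assms unfolding C2_on_def by (auto intro: continuous_on_subset)

(* Adding a constant and a multiple of |x - p|^4 keeps a test function C2 and does not change
   its gradient and Hessian at p; this turns a non-strict extremum into a strict one. *)
lemma C2_quartic_perturbation: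
  fixes p :: "'a::euclidean_space"
  assumes "C2_on UNIV \<phi> g H"
  obtains g' H' where "C2_on UNIV (\<lambda>x. \<phi> x + k + \<sigma> * ((x - p) \<bullet> (x - p))\<^sup>2) g' H'"
    and "g' p = g p" and "H' p = H p"
proof -
  have "C2_on UNIV (\<lambda>x. \<sigma> * ((x - p) \<bullet> (x - p))\<^sup>2)
     (\<lambda>x. (2 * (2 * \<sigma> * ((x - p) \<bullet> (x - p)))) *\<^sub>R (x - p))
     (\<lambda>x h. (2 * (2 * \<sigma> * ((x - p) \<bullet> (x - p)))) *\<^sub>R h + (4 * (2 * \<sigma>) * ((x - p) \<bullet> h)) *\<^sub>R (x - p))"
    by (rule C2_radial[where T = UNIV and F = "\<lambda>t. \<sigma> * t\<^sup>2"])
      (auto intro!: derivative_eq_intros)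
  from C2_add[OF C2_add_const[OF assms] this] show ?thesis by (rule that) auto
qed

(* The definition of viscosity sub/supersolution asks for strict touching; these versions
   apply at any (non-strict) maximum of u - \<phi> (minimum, resp.) over the closure, for a test
   function that is C2 on the whole space. *)
lemma visc_sub_at_max:
  assumes sub: "visc_sub \<Lambda> \<Omega> \<nu> u" and "open \<Omega>" and C: "C2_on UNIV \<phi> g H"
    and p: "p \<in> closure \<Omega>" and max: "\<forall>x\<in>closure \<Omega>. u x - \<phi> x \<le> u p - \<phi> p"
  shows "p \<in> \<Omega> \<Longrightarrow> E_op \<Lambda> (u p) (u p) (g p) (H p) \<le> 0"
    and "p \<in> frontier \<Omega> \<Longrightarrow> min (E_op \<Lambda> (u p) (u p) (g p) (H p)) (g p \<bullet> \<nu> p) \<le> 0"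
proof -
  define \<psi> where "\<psi> x = \<phi> x + (u p - \<phi> p) + ((x - p) \<bullet> (x - p))\<^sup>2" for x
  obtain g' H' where C': "C2_on UNIV \<psi> g' H'" and gH: "g' p = g p" "H' p = H p"
    using C2_quartic_perturbation[OF C, of "u p - \<phi> p" 1 p] unfolding \<psi>_def by auto
  have touch: "\<psi> p = u p" by (simp add: \<psi>_def)
  have "0 < ((x - p) \<bullet> (x - p))\<^sup>2" if "x \<noteq> p" for x
    using that by simp
  then have above: "\<forall>x\<in>closure \<Omega> - {p}. u x < \<psi> x"
    using max by (fastforce simp: \<psi>_def)
  show "E_op \<Lambda> (u p) (u p) (g p) (H p) \<le> 0" if "p \<in> \<Omega>"
  proof -
    have "C2_on \<Omega> \<psi> g' H'" using C2_on_subset[OF C' \<open>open \<Omega>\<close>] by simp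
    moreover have "\<forall>x\<in>\<Omega> - {p}. u x < \<psi> x" using above closure_subset by blast
    ultimately show ?thesis using sub that touch gH unfolding visc_sub_def by metis
  qed
  show "min (E_op \<Lambda> (u p) (u p) (g p) (H p)) (g p \<bullet> \<nu> p) \<le> 0" if "p \<in> frontier \<Omega>"
    using sub that touch gH C' above unfolding visc_sub_def by (metis subset_UNIV)
qed

lemma visc_super_at_min:
  assumes super: "visc_super \<Lambda> \<Omega> \<nu> u" and "open \<Omega>" and C: "C2_on UNIV \<phi> g H"
    and p: "p \<in> closure \<Omega>" and min: "\<forall>x\<in>closure \<Omega>. u p - \<phi> p \<le> u x - \<phi> x"
  shows "p \<in> \<Omega> \<Longrightarrow> E_op \<Lambda> (u p) (u p) (g p) (H p) \<ge> 0"
    and "p \<in> frontier \<Omega> \<Longrightarrow> max (E_op \<Lambda> (u p) (u p) (g p) (H p)) (g p \<bullet> \<nu> p) \<ge> 0"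
proof -
  define \<psi> where "\<psi> x = \<phi> x + (u p - \<phi> p) + - 1 * ((x - p) \<bullet> (x - p))\<^sup>2" for x
  obtain g' H' where C': "C2_on UNIV \<psi> g' H'" and gH: "g' p = g p" "H' p = H p"
    using C2_quartic_perturbation[OF C, of "u p - \<phi> p" "- 1" p] unfolding \<psi>_def by auto
  have touch: "\<psi> p = u p" by (simp add: \<psi>_def)
  have "0 < ((x - p) \<bullet> (x - p))\<^sup>2" if "x \<noteq> p" for x
    using that by simp
  then have below: "\<forall>x\<in>closure \<Omega> - {p}. \<psi> x < u x"
    using min by (fastforce simp: \<psi>_def)
  show "E_op \<Lambda> (u p) (u p) (g p) (H p) \<ge> 0" if "p \<in> \<Omega>"
  proof -
    have "C2_on \<Omega> \<psi> g' H'" using C2_on_subset[OF C' \<open>open \<Omega>\<close>] by simp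
    moreover have "\<forall>x\<in>\<Omega> - {p}. \<psi> x < u x" using below closure_subset by blast
    ultimately show ?thesis using super that touch gH unfolding visc_super_def by metis
  qed
  show "max (E_op \<Lambda> (u p) (u p) (g p) (H p)) (g p \<bullet> \<nu> p) \<ge> 0" if "p \<in> frontier \<Omega>"
    using super that touch gH C' below unfolding visc_super_def by (metis subset_UNIV)
qed

lemma E_op_neg_if_convex_direction:
  assumes "0 \<le> v" and "X \<xi> \<bullet> \<xi> > 0"
  shows "E_op \<Lambda> v s \<xi> X < 0"
  using assms unfolding E_op_def by auto

lemma E_op_neg_if_slow:
  assumes "0 < v" and "norm \<xi> < \<Lambda> * \<bar>s\<bar>"
  shows "E_op \<Lambda> v s \<xi> X < 0"
  using assms unfolding E_op_def by auto

lemma E_op_pos_if_steep_concave: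
  assumes "0 < v" and "\<Lambda> * \<bar>s\<bar> < norm \<xi>" and "X \<xi> \<bullet> \<xi> < 0"
  shows "E_op \<Lambda> v s \<xi> X > 0"
  using assms unfolding E_op_def by auto

lemma radial_hessian_form:
  fixes y :: "'a::euclidean_space"
  shows "(a *\<^sub>R (a *\<^sub>R y) + (4 * b * (y \<bullet> (a *\<^sub>R y))) *\<^sub>R y) \<bullet> (a *\<^sub>R y)
     = a\<^sup>2 * (y \<bullet> y) * (a + 4 * b * (y \<bullet> y))"
  by (simp add: algebra_simps power2_eq_square inner_commute)

(* If \<rho> < 0 on \<Omega> near a point p of the closure with \<rho>(p) \<ge> 0, then the gradient of \<rho>
   at p makes a non-acute angle with every segment from p into the interior of the convex set \<Omega>
   (otherwise \<rho> would increase along the segment, which lies in \<Omega>). *)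
lemma gradient_nonpos_towards_interior:
  fixes \<Omega> :: "'a::euclidean_space set"
  assumes "convex \<Omega>" and p: "p \<in> closure \<Omega>" and y: "y \<in> interior \<Omega>"
    and der: "(\<rho> has_derivative (\<lambda>h. G \<bullet> h)) (at p)" and "0 \<le> \<rho> p"
    and "r > 0" and neg: "\<forall>x\<in>\<Omega> \<inter> ball p r. \<rho> x < 0"
  shows "G \<bullet> (y - p) \<le> 0"
proof (rule ccontr)
  define d where "d = y - p"
  assume "\<not> G \<bullet> (y - p) \<le> 0"
  then have pos: "G \<bullet> d > 0" by (simp add: d_def)
  have line: "((\<lambda>t. p + t *\<^sub>R d) has_derivative (\<lambda>t. t *\<^sub>R d)) (at 0)"
    by (auto intro!: derivative_eq_intros)
  have "(\<rho> has_derivative (\<lambda>h. G \<bullet> h)) (at (p + 0 *\<^sub>R d))"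
    using der by simp
  from has_derivative_compose[OF line this]
  have "((\<lambda>t. \<rho> (p + t *\<^sub>R d)) has_derivative (\<lambda>t. G \<bullet> (t *\<^sub>R d))) (at 0)" .
  moreover have "(\<lambda>t. G \<bullet> (t *\<^sub>R d)) = (*) (G \<bullet> d)"
    by (rule ext) simp
  ultimately have "((\<lambda>t. \<rho> (p + t *\<^sub>R d)) has_real_derivative G \<bullet> d) (at 0)"
    by (simp add: has_field_derivative_def)
  from DERIV_pos_inc_right[OF this pos]
  obtain \<delta> where "\<delta> > 0" "\<forall>t>0. t < \<delta> \<longrightarrow> \<rho> p < \<rho> (p + t *\<^sub>R d)"
    by auto
  then have "\<forall>\<^sub>F t in at_right 0. \<rho> p < \<rho> (p + t *\<^sub>R d)"
    unfolding eventually_at_right_field by blast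
  moreover have "\<forall>\<^sub>F t in at_right 0. t < (1::real)"
    unfolding eventually_at_right_field by (intro exI[of _ 1]) auto
  moreover have "\<forall>\<^sub>F t in at_right 0. p + t *\<^sub>R d \<in> ball p r"
  proof -
    have "((\<lambda>t. p + t *\<^sub>R d) \<longlongrightarrow> p) (at_right 0)"
      by (auto intro!: tendsto_eq_intros)
    from tendstoD[OF this \<open>r > 0\<close>] show ?thesis by (simp add: dist_commute)
  qed
  ultimately have "\<forall>\<^sub>F t in at_right 0. 0 < t \<and> t < 1 \<and> \<rho> p < \<rho> (p + t *\<^sub>R d) \<and> p + t *\<^sub>R d \<in> ball p r"
    using eventually_at_right_less[of "0::real"] by eventually_elim blast
  then obtain t where t: "0 < t" "t < 1" "\<rho> p < \<rho> (p + t *\<^sub>R d)" "p + t *\<^sub>R d \<in> ball p r"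
    using eventually_happens'[OF trivial_limit_at_right_real] by blast
  have "p - t *\<^sub>R (p - y) \<in> interior \<Omega>"
    using mem_interior_closure_convex_shrink[OF \<open>convex \<Omega>\<close> y p] t by simp
  moreover have "p - t *\<^sub>R (p - y) = p + t *\<^sub>R d"
    by (simp add: d_def algebra_simps)
  ultimately have "p + t *\<^sub>R d \<in> \<Omega> \<inter> ball p r"
    using interior_subset t(4) by auto
  with neg have "\<rho> (p + t *\<^sub>R d) < 0" by blast
  with t(3) \<open>0 \<le> \<rho> p\<close> show False by linarith
qed

(* This is where convexity enters:
   the Neumann condition of a radial test function centred in \<Omega> has a definite sign. *)
lemma outer_normal_separates:
  fixes \<Omega> :: "'a::euclidean_space set"
  assumes "open \<Omega>" "convex \<Omega>" "smooth_boundary_normal \<Omega> \<nu>"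
    and p: "p \<in> frontier \<Omega>" and z: "z \<in> \<Omega>"
  shows "(p - z) \<bullet> \<nu> p > 0"
proof -
  obtain r \<rho> grad where "r > 0"
    and der: "\<forall>x\<in>ball p r. (\<rho> has_derivative (\<lambda>h. grad x \<bullet> h)) (at x) \<and> grad x \<noteq> 0"
    and level: "\<Omega> \<inter> ball p r = {x\<in>ball p r. \<rho> x < 0}"
    and nu: "\<nu> p = (1 / norm (grad p)) *\<^sub>R grad p"
    using assms(3) p unfolding smooth_boundary_normal_def by blast
  define G where "G = grad p"
  have derp: "(\<rho> has_derivative (\<lambda>h. G \<bullet> h)) (at p)" and "G \<noteq> 0"
    using der \<open>r > 0\<close> by (auto simp: G_def)
  have "p \<notin> \<Omega>" using p \<open>open \<Omega>\<close> frontier_disjoint_eq by blast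
  have "0 \<le> \<rho> p"
  proof (rule ccontr)
    assume "\<not> 0 \<le> \<rho> p"
    then have "p \<in> \<Omega> \<inter> ball p r" unfolding level using \<open>r > 0\<close> by simp
    with \<open>p \<notin> \<Omega>\<close> show False by blast
  qed
  have pc: "p \<in> closure \<Omega>" using p by (simp add: frontier_def)
  obtain e where "e > 0" "ball z e \<subseteq> \<Omega>" using z \<open>open \<Omega>\<close> open_contains_ball by blast
  define w where "w = (e / 2 / norm G) *\<^sub>R G"
  have "norm w < e" using \<open>G \<noteq> 0\<close> \<open>e > 0\<close> by (simp add: w_def)
  then have "z + w \<in> interior \<Omega>"
    using \<open>ball z e \<subseteq> \<Omega>\<close> interior_open[OF \<open>open \<Omega>\<close>] by (auto simp: dist_norm)
  then have "G \<bullet> ((z + w) - p) \<le> 0"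
    using gradient_nonpos_towards_interior[OF \<open>convex \<Omega>\<close> pc _ derp \<open>0 \<le> \<rho> p\<close> \<open>r > 0\<close>] level
    by blast
  moreover have "G \<bullet> w = e / 2 * norm G"
    using \<open>G \<noteq> 0\<close> by (simp add: w_def power2_norm_eq_inner[symmetric] power2_eq_square)
  ultimately have "G \<bullet> (p - z) \<ge> e / 2 * norm G"
    by (simp add: inner_diff_right inner_add_right)
  moreover have "e / 2 * norm G > 0" using \<open>e > 0\<close> \<open>G \<noteq> 0\<close> by simp
  ultimately show ?thesis using \<open>G \<noteq> 0\<close> by (simp add: nu G_def[symmetric] inner_commute)
qed

(* Radial test functions centred at an interior point have outward (inward) pointing gradient on
   the boundary, so at a boundary extremum the Neumann alternative is excluded and the
   operator alone must have the right sign. *)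
lemma steep_concave_max_impossible:
  fixes \<Omega> :: "'a::euclidean_space set"
  assumes "open \<Omega>" "convex \<Omega>" "smooth_boundary_normal \<Omega> \<nu>" and sub: "visc_sub \<Lambda> \<Omega> \<nu> u"
    and C: "C2_on UNIV \<phi> g H" and p: "p \<in> closure \<Omega>"
    and p_max: "\<forall>x\<in>closure \<Omega>. u x - \<phi> x \<le> u p - \<phi> p"
    and x0: "x0 \<in> \<Omega>" and grad: "g p = A *\<^sub>R (p - x0)" and "A > 0"
    and "0 < u p" and steep: "\<Lambda> * u p < norm (g p)" and concave: "H p (g p) \<bullet> g p < 0"
  shows False
proof -
  note test = visc_sub_at_max[OF sub \<open>open \<Omega>\<close> C p p_max]
  have E: "E_op \<Lambda> (u p) (u p) (g p) (H p) > 0"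
    using \<open>0 < u p\<close> steep concave by (intro E_op_pos_if_steep_concave) auto
  show False
  proof (cases "p \<in> \<Omega>")
    case True
    with E test(1) show False by (meson not_le)
  next
    case False
    then have fr: "p \<in> frontier \<Omega>" using p \<open>open \<Omega>\<close> by (simp add: frontier_def interior_open)
    have "(p - x0) \<bullet> \<nu> p > 0"
      using outer_normal_separates[OF \<open>open \<Omega>\<close> \<open>convex \<Omega>\<close> assms(3) fr x0] .
    then have "g p \<bullet> \<nu> p > 0" using \<open>A > 0\<close> by (simp add: grad)
    with E test(2)[OF fr] show False by linarith
  qed
qed

lemma convex_min_impossible:
  fixes \<Omega> :: "'a::euclidean_space set"
  assumes "open \<Omega>" "convex \<Omega>" "smooth_boundary_normal \<Omega> \<nu>" and super: "visc_super \<Lambda> \<Omega> \<nu> u"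
    and C: "C2_on UNIV \<phi> g H" and p: "p \<in> closure \<Omega>"
    and p_min: "\<forall>x\<in>closure \<Omega>. u p - \<phi> p \<le> u x - \<phi> x"
    and c: "c \<in> \<Omega>" and grad: "g p = A *\<^sub>R (p - c)" and "A < 0"
    and "0 \<le> u p" and convex_dir: "H p (g p) \<bullet> g p > 0"
  shows False
proof -
  note test = visc_super_at_min[OF super \<open>open \<Omega>\<close> C p p_min]
  have E: "E_op \<Lambda> (u p) (u p) (g p) (H p) < 0"
    using \<open>0 \<le> u p\<close> convex_dir by (rule E_op_neg_if_convex_direction)
  show False
  proof (cases "p \<in> \<Omega>")
    case True
    with E test(1) show False by (meson not_le)
  next
    case False
    then have fr: "p \<in> frontier \<Omega>" using p \<open>open \<Omega>\<close> by (simp add: frontier_def interior_open)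
    have "(p - c) \<bullet> \<nu> p > 0"
      using outer_normal_separates[OF \<open>open \<Omega>\<close> \<open>convex \<Omega>\<close> assms(3) fr c] .
    then have "g p \<bullet> \<nu> p < 0" using \<open>A < 0\<close> by (simp add: grad mult_neg_pos)
    with E test(2)[OF fr] show False by linarith
  qed
qed

lemma gaussian_bump:
  fixes c :: "'a::euclidean_space"
  assumes "\<epsilon> > 0" "e > 0"
  obtains g H where "C2_on UNIV (\<lambda>x. \<epsilon> * exp (- ((x - c) \<bullet> (x - c)) / (2 * e\<^sup>2))) g H"
    and "\<And>x. \<exists>A<0. g x = A *\<^sub>R (x - c)"
    and "\<And>x. norm (x - c) \<le> e \<Longrightarrow> norm (g x) \<le> \<epsilon> / e"
    and "\<And>x. e < norm (x - c) \<Longrightarrow> H x (g x) \<bullet> g x > 0"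
proof -
  define k where "k = 1 / (2 * e\<^sup>2)"
  have "k > 0" using \<open>e > 0\<close> by (simp add: k_def)
  define F1 where "F1 t = - \<epsilon> * k * exp (- k * t)" for t
  define F2 where "F2 t = \<epsilon> * k\<^sup>2 * exp (- k * t)" for t
  let ?s = "\<lambda>x. (x - c) \<bullet> (x - c)"
  have C: "C2_on UNIV (\<lambda>x. \<epsilon> * exp (- k * ?s x)) (\<lambda>x. (2 * F1 (?s x)) *\<^sub>R (x - c))
     (\<lambda>x h. (2 * F1 (?s x)) *\<^sub>R h + (4 * F2 (?s x) * ((x - c) \<bullet> h)) *\<^sub>R (x - c))"
    by (rule C2_radial[where T = UNIV and F = "\<lambda>t. \<epsilon> * exp (- k * t)"])
      (auto intro!: derivative_eq_intros continuous_intros simp: F1_def F2_def power2_eq_square)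
  have "(\<lambda>x. \<epsilon> * exp (- k * ?s x)) = (\<lambda>x. \<epsilon> * exp (- ?s x / (2 * e\<^sup>2)))"
    by (simp add: k_def)
  with C have "C2_on UNIV (\<lambda>x. \<epsilon> * exp (- ?s x / (2 * e\<^sup>2))) (\<lambda>x. (2 * F1 (?s x)) *\<^sub>R (x - c))
     (\<lambda>x h. (2 * F1 (?s x)) *\<^sub>R h + (4 * F2 (?s x) * ((x - c) \<bullet> h)) *\<^sub>R (x - c))"
    by simp
  then show ?thesis
  proof (rule that)
    fix x
    have "2 * F1 (?s x) < 0" using \<open>\<epsilon> > 0\<close> \<open>k > 0\<close> by (simp add: F1_def)
    then show "\<exists>A<0. (2 * F1 (?s x)) *\<^sub>R (x - c) = A *\<^sub>R (x - c)" by blast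
  next
    fix x assume near: "norm (x - c) \<le> e"
    have "norm ((2 * F1 (?s x)) *\<^sub>R (x - c)) = 2 * \<epsilon> * k * exp (- k * ?s x) * norm (x - c)"
      using \<open>\<epsilon> > 0\<close> \<open>k > 0\<close> by (simp add: F1_def abs_mult)
    also have "\<dots> \<le> 2 * \<epsilon> * k * 1 * e"
      using \<open>\<epsilon> > 0\<close> \<open>k > 0\<close> near by (intro mult_mono) auto
    also have "\<dots> = \<epsilon> / e" using \<open>e > 0\<close> by (simp add: k_def power2_eq_square)
    finally show "norm ((2 * F1 (?s x)) *\<^sub>R (x - c)) \<le> \<epsilon> / e" .
  next
    fix x assume far: "e < norm (x - c)"
    define a where "a = 2 * F1 (?s x)"
    have "?s x > e\<^sup>2"
      using far \<open>e > 0\<close> by (simp add: power2_norm_eq_inner[symmetric] power_strict_mono)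
    then have "2 * k * ?s x - 1 > 0" using \<open>e > 0\<close> by (simp add: k_def field_simps)
    moreover have "a + 4 * F2 (?s x) * ?s x = 2 * \<epsilon> * k * exp (- k * ?s x) * (2 * k * ?s x - 1)"
      by (simp add: a_def F1_def F2_def algebra_simps power2_eq_square)
    ultimately have "a + 4 * F2 (?s x) * ?s x > 0" using \<open>\<epsilon> > 0\<close> \<open>k > 0\<close> by simp
    moreover have "a \<noteq> 0" "?s x > 0" using \<open>\<epsilon> > 0\<close> \<open>k > 0\<close> \<open>e < norm (x - c)\<close> \<open>e > 0\<close>
      by (auto simp: a_def F1_def)
    ultimately show "((2 * F1 (?s x)) *\<^sub>R ((2 * F1 (?s x)) *\<^sub>R (x - c))
        + (4 * F2 (?s x) * ((x - c) \<bullet> ((2 * F1 (?s x)) *\<^sub>R (x - c)))) *\<^sub>R (x - c))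
        \<bullet> ((2 * F1 (?s x)) *\<^sub>R (x - c)) > 0"
      unfolding radial_hessian_form a_def[symmetric] by simp
  qed
qed

(* Test from below with a
   Gaussian bump centred inside \<Omega>: at a minimum point of u - bump, near the centre the
   gradient is too short (|\<nabla>\<phi>| < \<Lambda>u), away from it the bump is convex in the gradient
   direction, and on the boundary its normal derivative is negative. *)
lemma no_positive_supersolution:
  fixes \<Omega> :: "'a::euclidean_space set"
  assumes "open \<Omega>" "convex \<Omega>" "bounded \<Omega>" "smooth_boundary_normal \<Omega> \<nu>" and "\<Lambda> > 0"
    and super: "visc_super \<Lambda> \<Omega> \<nu> u" and cont: "continuous_on (closure \<Omega>) u"
    and c: "c \<in> \<Omega>" and pos: "\<forall>x\<in>\<Omega>. u x > 0"
  shows False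
proof -
  have nonneg: "\<forall>x\<in>closure \<Omega>. u x \<ge> 0"
    using continuous_ge_on_closure[OF cont] pos by (metis less_imp_le)
  obtain e where "e > 0" and ball: "cball c e \<subseteq> \<Omega>"
    using \<open>open \<Omega>\<close> c open_contains_cball by blast
  have "continuous_on (cball c e) u"
    using continuous_on_subset[OF cont] ball closure_subset by blast
  moreover have "cball c e \<noteq> {}" using \<open>e > 0\<close> by simp
  ultimately obtain xm where "xm \<in> cball c e" and xm_min: "\<forall>y\<in>cball c e. u xm \<le> u y"
    using continuous_attains_inf[OF compact_cball] by blast
  define \<mu> where "\<mu> = u xm"
  have "\<mu> > 0" using pos \<open>xm \<in> cball c e\<close> ball by (auto simp: \<mu>_def)
  define \<epsilon> where "\<epsilon> = \<Lambda> * \<mu> * e / 2"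
  have "\<epsilon> > 0" using \<open>\<Lambda> > 0\<close> \<open>\<mu> > 0\<close> \<open>e > 0\<close> by (simp add: \<epsilon>_def)
  obtain g H where C: "C2_on UNIV (\<lambda>x. \<epsilon> * exp (- ((x - c) \<bullet> (x - c)) / (2 * e\<^sup>2))) g H"
    and radial: "\<And>x. \<exists>A<0. g x = A *\<^sub>R (x - c)"
    and slow: "\<And>x. norm (x - c) \<le> e \<Longrightarrow> norm (g x) \<le> \<epsilon> / e"
    and convex_dir: "\<And>x. e < norm (x - c) \<Longrightarrow> H x (g x) \<bullet> g x > 0"
    using gaussian_bump[OF \<open>\<epsilon> > 0\<close> \<open>e > 0\<close>, of c] by blast
  have "compact (closure \<Omega>)" using \<open>bounded \<Omega>\<close> by (simp add: compact_closure)
  moreover have "closure \<Omega> \<noteq> {}" using c closure_subset by blast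
  moreover have "continuous_on (closure \<Omega>) (\<lambda>x. u x - \<epsilon> * exp (- ((x - c) \<bullet> (x - c)) / (2 * e\<^sup>2)))"
    using \<open>e > 0\<close> by (intro continuous_intros cont) auto
  ultimately obtain p where p: "p \<in> closure \<Omega>"
    and p_min: "\<forall>x\<in>closure \<Omega>. u p - \<epsilon> * exp (- ((p - c) \<bullet> (p - c)) / (2 * e\<^sup>2))
                 \<le> u x - \<epsilon> * exp (- ((x - c) \<bullet> (x - c)) / (2 * e\<^sup>2))"
    using continuous_attains_inf by blast
  obtain A where "A < 0" and grad: "g p = A *\<^sub>R (p - c)" using radial by blast
  show False
  proof (cases "norm (p - c) \<le> e")
    case True
    then have "p \<in> cball c e" by (simp add: dist_norm norm_minus_commute)
    then have "p \<in> \<Omega>" and "u p \<ge> \<mu>" using ball xm_min by (auto simp: \<mu>_def)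
    have "norm (g p) \<le> \<Lambda> * \<mu> / 2" using slow[OF True] \<open>e > 0\<close> by (simp add: \<epsilon>_def)
    also have "\<dots> < \<Lambda> * \<bar>u p\<bar>" using \<open>\<Lambda> > 0\<close> \<open>\<mu> > 0\<close> \<open>u p \<ge> \<mu>\<close> by simp
    finally have "E_op \<Lambda> (u p) (u p) (g p) (H p) < 0"
      using \<open>u p \<ge> \<mu>\<close> \<open>\<mu> > 0\<close> by (intro E_op_neg_if_slow) auto
    with visc_super_at_min(1)[OF super \<open>open \<Omega>\<close> C p p_min \<open>p \<in> \<Omega>\<close>] show False by linarith
  next
    case False
    with convex_min_impossible[OF assms(1,2,4) super C p p_min c grad \<open>A < 0\<close>] nonneg p convex_dir
    show False by auto
  qed
qed

(* Parameters of the cone barrier used to compare u with the distance to a point x0: for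
   \<gamma> > 0 and 0 < \<delta> \<le> D with D \<ge> 1, the radial profile
     profile(|x - x0|\<^sup>2) = slope * sqrt(|x - x0|\<^sup>2 + eta\<^sup>2) - bend * |x - x0|\<^sup>2
   is a smoothed cone that stays below |x - x0| + \<gamma>/2, and on the annulus \<delta> \<le> |x - x0| \<le> D
   is strictly steeper than 1 and strictly concave in the radial direction. profile1 and
   profile2 are its first and second derivatives in the variable t = |x - x0|\<^sup>2. *)
locale cone_parameters =
  fixes \<gamma> D \<delta> :: real
  assumes gamma_pos: "\<gamma> > 0" and D_ge_1: "D \<ge> 1"
    and delta_pos: "0 < \<delta>" and delta_le_D: "\<delta> \<le> D"
begin

definition tau :: real where "tau = min 1 (\<gamma> / (4 * D))"
definition slope :: real where "slope = 1 + tau"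
definition bend :: real where "bend = tau / (8 * D)"
definition eta :: real where "eta = min (\<gamma> / 8) (tau * \<delta>\<^sup>2 / (16 * D))"

definition profile :: "real \<Rightarrow> real" where
  "profile t = slope * sqrt (t + eta\<^sup>2) - bend * t"
definition profile1 :: "real \<Rightarrow> real" where
  "profile1 t = slope / (2 * sqrt (t + eta\<^sup>2)) - bend"
definition profile2 :: "real \<Rightarrow> real" where
  "profile2 t = - slope / (4 * sqrt (t + eta\<^sup>2) ^ 3)"

lemma D_pos: "D > 0"
  using D_ge_1 by simp

lemma tau_pos: "tau > 0" and tau_le_1: "tau \<le> 1" and tau_D: "tau * D \<le> \<gamma> / 4"
  using gamma_pos D_pos by (auto simp: tau_def min_def field_simps)

lemma bend_pos: "bend > 0" and bend_D: "bend * D = tau / 8"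
  using tau_pos D_pos by (auto simp: bend_def)

lemma eta_pos: "eta > 0"
  using gamma_pos tau_pos delta_pos D_pos by (simp add: eta_def)

lemma eta_sq_small: "eta\<^sup>2 \<le> tau * \<delta>\<^sup>2 / 16"
proof -
  have "tau * \<delta>\<^sup>2 / (16 * D) = (tau * \<delta> / 16) * (\<delta> / D)" by (simp add: power2_eq_square)
  also have "\<dots> \<le> tau * \<delta> / 16"
    using tau_pos delta_pos delta_le_D D_pos by (intro mult_left_le) auto
  finally have "eta \<le> tau * \<delta> / 16" by (simp add: eta_def)
  then have "eta\<^sup>2 \<le> (tau * \<delta> / 16)\<^sup>2" using eta_pos by (simp add: power_mono)
  also have "\<dots> = (tau / 16) * (tau * \<delta>\<^sup>2 / 16)" by (simp add: power2_eq_square)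
  also have "\<dots> \<le> tau * \<delta>\<^sup>2 / 16"
    by (rule mult_left_le_one_le) (use tau_pos tau_le_1 in auto)
  finally show ?thesis .
qed

lemma eta_sq_tiny: "eta\<^sup>2 \<le> tau * \<delta> ^ 3 / (256 * D)"
proof -
  have "eta\<^sup>2 \<le> (tau * \<delta>\<^sup>2 / (16 * D))\<^sup>2" using eta_pos by (simp add: eta_def power_mono)
  also have "\<dots> = (tau * \<delta> ^ 3 / (256 * D)) * (tau * (\<delta> / D))"
    using D_pos by (simp add: power2_eq_square power3_eq_cube field_simps)
  also have "\<dots> \<le> tau * \<delta> ^ 3 / (256 * D)"
  proof (rule mult_left_le)
    show "tau * (\<delta> / D) \<le> 1"
      using mult_mono[OF tau_le_1, of "\<delta> / D" 1] tau_pos delta_pos delta_le_D D_pos by simp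
  qed (use tau_pos delta_pos D_pos in simp)
  finally show ?thesis .
qed

lemma profile_steep:
  assumes "\<delta> \<le> n" "n \<le> D"
  shows "2 * profile1 (n\<^sup>2) * n > 1"
proof -
  define R where "R = sqrt (n\<^sup>2 + eta\<^sup>2)"
  have n0: "n > 0" using assms delta_pos by simp
  have R0: "R > 0" using n0 by (simp add: R_def add_pos_nonneg)
  have R2: "R\<^sup>2 = n\<^sup>2 + eta\<^sup>2" by (simp add: R_def)
  have "n \<le> R" unfolding R_def by (rule real_le_rsqrt) simp
  then have "(n / R)\<^sup>2 \<le> n / R"
    using n0 R0 mult_left_le[of "n / R" "n / R"] by (simp add: power2_eq_square)
  moreover have "(n / R)\<^sup>2 = 1 - eta\<^sup>2 / R\<^sup>2"
  proof -
    have "(n / R)\<^sup>2 = (R\<^sup>2 - eta\<^sup>2) / R\<^sup>2" using R2 by (simp add: power_divide)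
    also have "\<dots> = 1 - eta\<^sup>2 / R\<^sup>2" using R0 by (simp add: diff_divide_distrib)
    finally show ?thesis .
  qed
  moreover have "eta\<^sup>2 / R\<^sup>2 \<le> eta\<^sup>2 / \<delta>\<^sup>2"
  proof (rule divide_left_mono)
    show "\<delta>\<^sup>2 \<le> R\<^sup>2" using assms delta_pos \<open>n \<le> R\<close> by (simp add: power_mono)
  qed (use delta_pos R0 in auto)
  moreover have "eta\<^sup>2 / \<delta>\<^sup>2 \<le> tau / 16"
    using eta_sq_small delta_pos by (simp add: divide_le_eq field_simps)
  ultimately have "n / R \<ge> 1 - tau / 16" by linarith
  then have "slope * (n / R) \<ge> (1 + tau) * (1 - tau / 16)"
    unfolding slope_def using tau_pos by (intro mult_left_mono) auto
  moreover have "(1 + tau) * (1 - tau / 16) \<ge> 1 + tau - tau / 8"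
    using mult_left_le[OF tau_le_1, of tau] tau_pos by (simp add: field_simps)
  moreover have "2 * bend * n \<le> tau / 4"
    using mult_left_mono[OF \<open>n \<le> D\<close>, of bend] bend_pos bend_D by linarith
  moreover have "2 * profile1 (n\<^sup>2) * n = slope * (n / R) - 2 * bend * n"
    using R0 by (simp add: profile1_def R_def field_simps)
  ultimately show ?thesis using tau_pos by linarith
qed

lemma profile_concave:
  assumes "\<delta> \<le> n" "n \<le> D"
  shows "profile1 (n\<^sup>2) + 2 * profile2 (n\<^sup>2) * n\<^sup>2 < 0"
proof -
  define R where "R = sqrt (n\<^sup>2 + eta\<^sup>2)"
  have n0: "n > 0" using assms delta_pos by simp
  have R0: "R > 0" using n0 by (simp add: R_def add_pos_nonneg)
  have "n \<le> R" unfolding R_def by (rule real_le_rsqrt) simp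
  have p1: "profile1 (n\<^sup>2) = slope / (2 * R) - bend"
    and p2: "profile2 (n\<^sup>2) = - slope / (4 * R ^ 3)"
    by (simp_all add: profile1_def profile2_def R_def)
  have "profile1 (n\<^sup>2) + 2 * profile2 (n\<^sup>2) * n\<^sup>2 = slope * (R\<^sup>2 - n\<^sup>2) / (2 * R ^ 3) - bend"
    unfolding p1 p2 using R0 by (simp add: field_simps power2_eq_square power3_eq_cube)
  also have "\<dots> = slope * eta\<^sup>2 / (2 * R ^ 3) - bend" by (simp add: R_def)
  also have "\<dots> < 0"
  proof -
    have "slope * eta\<^sup>2 \<le> 2 * eta\<^sup>2" using tau_le_1 by (simp add: slope_def mult_right_mono)
    also have "\<dots> \<le> 2 * (tau * \<delta> ^ 3 / (256 * D))" using eta_sq_tiny by simp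
    also have "\<dots> < 2 * bend * \<delta> ^ 3" using tau_pos D_pos delta_pos by (simp add: bend_def field_simps)
    also have "\<dots> \<le> 2 * bend * R ^ 3"
      using bend_pos delta_pos assms \<open>n \<le> R\<close> by (simp add: power_mono)
    finally show ?thesis using R0 by (simp add: divide_less_eq mult_ac)
  qed
  finally show ?thesis .
qed

lemma profile_nonneg:
  assumes "0 \<le> n" "n \<le> D"
  shows "profile (n\<^sup>2) \<ge> 0"
proof -
  have "bend * n \<le> slope"
    using mult_left_mono[OF \<open>n \<le> D\<close>, of bend] bend_pos bend_D tau_pos by (simp add: slope_def)
  then have "bend * n\<^sup>2 \<le> slope * n"
    using assms by (simp add: power2_eq_square mult.assoc[symmetric] mult_right_mono)
  also have "\<dots> \<le> slope * sqrt (n\<^sup>2 + eta\<^sup>2)"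
    using tau_pos by (simp add: slope_def real_le_rsqrt)
  finally show ?thesis by (simp add: profile_def)
qed

lemma profile_upper:
  assumes "0 \<le> n" "n \<le> D"
  shows "profile (n\<^sup>2) \<le> n + \<gamma> / 2"
proof -
  have "sqrt (n\<^sup>2 + eta\<^sup>2) \<le> n + eta"
    using assms eta_pos by (intro real_le_lsqrt) (auto simp: power2_sum)
  then have "slope * sqrt (n\<^sup>2 + eta\<^sup>2) \<le> (1 + tau) * (n + eta)"
    using tau_pos by (simp add: slope_def)
  also have "\<dots> = n + tau * n + (1 + tau) * eta" by (simp add: algebra_simps)
  also have "\<dots> \<le> n + tau * D + 2 * eta"
    using tau_pos tau_le_1 eta_pos assms by (intro add_mono mult_right_mono) auto
  also have "\<dots> \<le> n + \<gamma> / 2" using tau_D by (simp add: eta_def)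
  finally have "slope * sqrt (n\<^sup>2 + eta\<^sup>2) \<le> n + \<gamma> / 2" .
  moreover have "bend * n\<^sup>2 \<ge> 0" using bend_pos by simp
  ultimately show ?thesis by (simp add: profile_def)
qed

lemma profile_derivatives:
  assumes "- eta\<^sup>2 < t"
  shows "(profile has_real_derivative profile1 t) (at t)"
    and "(profile1 has_real_derivative profile2 t) (at t)"
proof -
  have "sqrt (t + eta\<^sup>2) > 0" using assms by simp
  then show "(profile has_real_derivative profile1 t) (at t)"
    and "(profile1 has_real_derivative profile2 t) (at t)"
    using assms unfolding profile_def[abs_def] profile1_def[abs_def] profile2_def
    by (auto intro!: derivative_eq_intros simp: field_simps power2_eq_square power3_eq_cube)
qed

lemma cone_test_function:
  fixes x0 :: "'a::euclidean_space"
  obtains g H where "C2_on UNIV (\<lambda>x. profile ((x - x0) \<bullet> (x - x0))) g H"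
    and "\<And>x. \<delta> \<le> norm (x - x0) \<Longrightarrow> norm (x - x0) \<le> D \<Longrightarrow>
           \<exists>A>0. g x = A *\<^sub>R (x - x0) \<and> 1 < A * norm (x - x0) \<and> H x (g x) \<bullet> g x < 0"
proof -
  let ?s = "\<lambda>x. (x - x0) \<bullet> (x - x0)"
  have "C2_on UNIV (\<lambda>x. profile (?s x)) (\<lambda>x. (2 * profile1 (?s x)) *\<^sub>R (x - x0))
     (\<lambda>x h. (2 * profile1 (?s x)) *\<^sub>R h + (4 * profile2 (?s x) * ((x - x0) \<bullet> h)) *\<^sub>R (x - x0))"
  proof (rule C2_radial[where T = "{t. - eta\<^sup>2 < t}"])
    show "continuous_on {t. - eta\<^sup>2 < t} profile2"
      unfolding profile2_def by (intro continuous_intros) auto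
    show "?s x \<in> {t. - eta\<^sup>2 < t}" for x
      using eta_pos inner_ge_zero[of "x - x0"] by (simp add: less_le_trans[of _ 0])
  qed (auto simp: open_Collect_less profile_derivatives)
  then show ?thesis
  proof (rule that)
    fix x assume annulus: "\<delta> \<le> norm (x - x0)" "norm (x - x0) \<le> D"
    define n where "n = norm (x - x0)"
    define A where "A = 2 * profile1 (n\<^sup>2)"
    have s: "?s x = n\<^sup>2" by (simp add: n_def power2_norm_eq_inner)
    have "1 < A * n" using profile_steep[OF annulus] by (simp add: A_def n_def)
    moreover have "n > 0" using annulus(1) delta_pos unfolding n_def by linarith
    ultimately have "A > 0" by (smt (verit) mult_nonpos_nonneg)
    have "A + 4 * profile2 (n\<^sup>2) * n\<^sup>2 < 0"
      using profile_concave[OF annulus] by (simp add: A_def n_def)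
    then have "(A *\<^sub>R (A *\<^sub>R (x - x0)) + (4 * profile2 (n\<^sup>2) * ((x - x0) \<bullet> (A *\<^sub>R (x - x0)))) *\<^sub>R (x - x0))
        \<bullet> (A *\<^sub>R (x - x0)) < 0"
      unfolding radial_hessian_form using \<open>A > 0\<close> \<open>n > 0\<close> s by (simp add: mult_pos_neg)
    with \<open>A > 0\<close> \<open>1 < A * n\<close> show "\<exists>A>0. (2 * profile1 (?s x)) *\<^sub>R (x - x0) = A *\<^sub>R (x - x0)
        \<and> 1 < A * norm (x - x0)
        \<and> ((2 * profile1 (?s x)) *\<^sub>R ((2 * profile1 (?s x)) *\<^sub>R (x - x0))
           + (4 * profile2 (?s x) * ((x - x0) \<bullet> ((2 * profile1 (?s x)) *\<^sub>R (x - x0)))) *\<^sub>R (x - x0))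
           \<bullet> ((2 * profile1 (?s x)) *\<^sub>R (x - x0)) < 0"
      unfolding s A_def n_def by blast
  qed
qed

end

(* The cone estimate: at points of the closure where u \<ge> 0, u is bounded by the distance to
   any interior point x0 with u(x0) \<le> 0. If u(x1) = |x1 - x0| + \<gamma> with \<gamma> > 0, then u - cone
   attains its maximum at a point p where u(p) \<ge> \<gamma>/2 and p is \<delta>-far from x0; there the
   cone is steeper than 1 \<ge> \<Lambda>u(p) and concave, contradicting the subsolution property
   (at the boundary also the Neumann condition fails, since the gradient points outward). *)
lemma cone_comparison:
  fixes \<Omega> :: "'a::euclidean_space set"
  assumes "open \<Omega>" "convex \<Omega>" "bounded \<Omega>" "smooth_boundary_normal \<Omega> \<nu>" and "\<Lambda> > 0"
    and sub: "visc_sub \<Lambda> \<Omega> \<nu> u" and cont: "continuous_on (closure \<Omega>) u"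
    and le: "\<forall>x\<in>closure \<Omega>. u x \<le> 1 / \<Lambda>"
    and x1: "x1 \<in> closure \<Omega>" and x0: "x0 \<in> \<Omega>" and "u x0 \<le> 0"
  shows "u x1 \<le> dist x1 x0"
proof (rule ccontr)
  define \<gamma> where "\<gamma> = u x1 - norm (x1 - x0)"
  assume "\<not> u x1 \<le> dist x1 x0"
  then have "\<gamma> > 0" by (simp add: \<gamma>_def dist_norm)
  obtain R where R: "\<forall>x\<in>closure \<Omega>. dist x0 x \<le> R"
    using bounded_closure[OF \<open>bounded \<Omega>\<close>] bounded_any_center by blast
  define D where "D = max 1 R"
  have "D \<ge> 1" by (simp add: D_def)
  have in_D: "norm (x - x0) \<le> D" if "x \<in> closure \<Omega>" for x
  proof -
    have "norm (x - x0) = dist x0 x" by (simp add: dist_norm norm_minus_commute)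
    also have "\<dots> \<le> R" using R that by blast
    finally show ?thesis by (simp add: D_def)
  qed
  obtain \<delta>0 where "\<delta>0 > 0" and near_x0: "\<forall>y\<in>closure \<Omega>. dist y x0 < \<delta>0 \<longrightarrow> dist (u y) (u x0) < \<gamma> / 2"
  proof -
    have "x0 \<in> closure \<Omega>" "\<gamma> / 2 > 0" using x0 closure_subset \<open>\<gamma> > 0\<close> by auto
    with cont show ?thesis unfolding continuous_on_iff using that by blast
  qed
  define \<delta> where "\<delta> = min \<delta>0 D"
  interpret cone_parameters \<gamma> D \<delta>
    using \<open>\<gamma> > 0\<close> \<open>D \<ge> 1\<close> \<open>\<delta>0 > 0\<close> by unfold_locales (auto simp: \<delta>_def)
  obtain g H where C: "C2_on UNIV (\<lambda>x. profile ((x - x0) \<bullet> (x - x0))) g H"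
    and annulus: "\<And>x. \<delta> \<le> norm (x - x0) \<Longrightarrow> norm (x - x0) \<le> D \<Longrightarrow>
           \<exists>A>0. g x = A *\<^sub>R (x - x0) \<and> 1 < A * norm (x - x0) \<and> H x (g x) \<bullet> g x < 0"
    using cone_test_function[of x0] by blast
  let ?\<phi> = "\<lambda>x. profile ((x - x0) \<bullet> (x - x0))"
  have \<phi>_norm: "?\<phi> x = profile ((norm (x - x0))\<^sup>2)" for x
    by (simp add: power2_norm_eq_inner)
  have "compact (closure \<Omega>)" using \<open>bounded \<Omega>\<close> by (simp add: compact_closure)
  moreover have "closure \<Omega> \<noteq> {}" using x1 by auto
  moreover have "continuous_on (closure \<Omega>) (\<lambda>x. u x - ?\<phi> x)"
    using C2_on_continuous[OF C] by (intro continuous_intros cont) (auto intro: continuous_on_subset)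
  ultimately obtain p where p: "p \<in> closure \<Omega>" and p_max: "\<forall>x\<in>closure \<Omega>. u x - ?\<phi> x \<le> u p - ?\<phi> p"
    using continuous_attains_sup by blast
  have "\<gamma> / 2 = u x1 - (norm (x1 - x0) + \<gamma> / 2)" by (simp add: \<gamma>_def field_simps)
  also have "\<dots> \<le> u x1 - ?\<phi> x1"
    using profile_upper[OF norm_ge_zero in_D[OF x1]] by (simp add: \<phi>_norm)
  also have "\<dots> \<le> u p - ?\<phi> p" using p_max x1 by blast
  also have "\<dots> \<le> u p" using profile_nonneg[OF norm_ge_zero in_D[OF p]] by (simp add: \<phi>_norm)
  finally have "u p \<ge> \<gamma> / 2" .
  have "\<delta> \<le> norm (p - x0)"
  proof (rule ccontr)
    assume "\<not> \<delta> \<le> norm (p - x0)"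
    then have "dist (u p) (u x0) < \<gamma> / 2"
      using near_x0 p by (simp add: \<delta>_def dist_norm)
    with \<open>u p \<ge> \<gamma> / 2\<close> \<open>u x0 \<le> 0\<close> show False
      unfolding dist_real_def using abs_ge_self[of "u p - u x0"] by linarith
  qed
  then obtain A where "A > 0" and grad: "g p = A *\<^sub>R (p - x0)"
    and steep: "1 < A * norm (p - x0)" and concave: "H p (g p) \<bullet> g p < 0"
    using annulus in_D[OF p] by blast
  have "u p > 0" using \<open>u p \<ge> \<gamma> / 2\<close> \<open>\<gamma> > 0\<close> by linarith
  have "u p \<le> 1 / \<Lambda>" using le p by blast
  then have "\<Lambda> * u p \<le> 1" using \<open>\<Lambda> > 0\<close> by (simp add: field_simps)
  also have "1 < norm (g p)" using steep \<open>A > 0\<close> by (simp add: grad)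
  finally show False
    using steep_concave_max_impossible[OF assms(1,2,4) sub C p p_max x0 grad \<open>A > 0\<close> \<open>u p > 0\<close>]
      concave by blast
qed

lemma positive_point_in_closure:
  fixes u :: "'a::metric_space \<Rightarrow> real"
  assumes cont: "continuous_on (closure \<Omega>) u" and x: "x \<in> closure \<Omega>" and "u x > 0"
  shows "x \<in> closure {y\<in>\<Omega>. u y > 0}"
  unfolding closure_approachable
proof (intro allI impI)
  fix e :: real assume "e > 0"
  obtain d where "d > 0" and d: "\<forall>y\<in>closure \<Omega>. dist y x < d \<longrightarrow> dist (u y) (u x) < u x"
    using cont x \<open>u x > 0\<close> unfolding continuous_on_iff by blast
  obtain y where "y \<in> \<Omega>" and "dist y x < min e d"
    using x \<open>e > 0\<close> \<open>d > 0\<close> unfolding closure_approachable by (metis min_less_iff_conj)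
  then have "dist (u y) (u x) < u x" using d closure_subset by force
  then have "u y > 0" by (simp add: dist_real_def abs_less_iff)
  with \<open>y \<in> \<Omega>\<close> \<open>dist y x < min e d\<close> show "\<exists>y\<in>{y\<in>\<Omega>. u y > 0}. dist y x < e" by auto
qed

(* By connectedness of \<Omega> and the impossibility of a positive supersolution, a solution that
   is positive somewhere in \<Omega> vanishes somewhere in \<Omega>. *)
lemma zero_level_set_nonempty:
  fixes \<Omega> :: "'a::euclidean_space set"
  assumes "open \<Omega>" "convex \<Omega>" "bounded \<Omega>" "smooth_boundary_normal \<Omega> \<nu>" "\<Lambda> > 0"
    and "visc_super \<Lambda> \<Omega> \<nu> u" and cont: "continuous_on (closure \<Omega>) u"
    and y: "y \<in> \<Omega>" and "u y > 0"
  shows "\<exists>z\<in>\<Omega>. u z = 0"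
proof (rule ccontr)
  assume no_zero: "\<not> (\<exists>z\<in>\<Omega>. u z = 0)"
  have "\<forall>x\<in>\<Omega>. u x > 0"
  proof (rule ccontr)
    assume "\<not> (\<forall>x\<in>\<Omega>. u x > 0)"
    then obtain x where "x \<in> \<Omega>" "u x \<le> 0" by auto
    have "connected (u ` \<Omega>)"
      using continuous_on_subset[OF cont closure_subset] convex_connected[OF \<open>convex \<Omega>\<close>]
      by (rule connected_continuous_image)
    then have "0 \<in> u ` \<Omega>"
      by (rule connectedD_interval[OF _ imageI[OF \<open>x \<in> \<Omega>\<close>] imageI[OF y]])
        (use \<open>u x \<le> 0\<close> \<open>u y > 0\<close> in auto)
    with no_zero show False by auto
  qed
  with no_positive_supersolution[OF assms(1-7) y] show False by blast
qed

lemma SUP_infdist_lower_bound: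
  fixes A Z :: "'a::metric_space set"
  assumes "bounded A" "Z \<noteq> {}" "x \<in> A" "c \<le> infdist x Z"
  shows "c \<le> (SUP y\<in>A. infdist y Z)"
proof -
  obtain z where "z \<in> Z" using \<open>Z \<noteq> {}\<close> by blast
  obtain R where R: "\<forall>y\<in>A. dist z y \<le> R" using \<open>bounded A\<close> bounded_any_center by blast
  have "bdd_above ((\<lambda>y. infdist y Z) ` A)"
  proof (rule bdd_aboveI2)
    fix y assume "y \<in> A"
    then show "infdist y Z \<le> R"
      using infdist_le2[OF \<open>z \<in> Z\<close>] R by (simp add: dist_commute)
  qed
  from cSUP_upper2[OF this assms(3)] show ?thesis using assms(4) by blast
qed

theorem mainTheorem11:
  fixes \<Omega> :: "'a::euclidean_space set" and \<nu> :: "'a \<Rightarrow> 'a" and u :: "'a \<Rightarrow> real" and \<Lambda> :: real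
  assumes "open \<Omega>" and "bounded \<Omega>" and "convex \<Omega>"
    and "smooth_boundary_normal \<Omega> \<nu>"
    and "\<Lambda> > 0"
    and "visc_solution \<Lambda> \<Omega> \<nu> u"
    and "\<not> (\<exists>c. \<forall>x\<in>closure \<Omega>. u x = c)"
    and "\<exists>x\<in>closure \<Omega>. u x = 1 / \<Lambda>" and "\<forall>x\<in>closure \<Omega>. u x \<le> 1 / \<Lambda>"
  shows "(\<forall>x\<in>closure \<Omega>. \<forall>x0\<in>\<Omega>. u x \<ge> 0 \<longrightarrow> u x0 \<le> 0 \<longrightarrow> dist x x0 \<ge> u x)
       \<and> (SUP x\<in>closure {y\<in>\<Omega>. u y > 0}. infdist x {y\<in>\<Omega>. u y = 0}) \<ge> 1 / \<Lambda>"
proof -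
  have cont: "continuous_on (closure \<Omega>) u"
    and sub: "visc_sub \<Lambda> \<Omega> \<nu> u" and super: "visc_super \<Lambda> \<Omega> \<nu> u"
    using assms(6) unfolding visc_solution_def by auto
  have cone: "\<forall>x\<in>closure \<Omega>. \<forall>x0\<in>\<Omega>. u x \<ge> 0 \<longrightarrow> u x0 \<le> 0 \<longrightarrow> dist x x0 \<ge> u x"
    using cone_comparison[OF assms(1,3,2,4,5) sub cont assms(9)] by blast
  obtain xb where xb: "xb \<in> closure \<Omega>" "u xb = 1 / \<Lambda>" using assms(8) by blast
  then have xb_pos: "xb \<in> closure {y\<in>\<Omega>. u y > 0}"
    using positive_point_in_closure[OF cont] \<open>\<Lambda> > 0\<close> by simp
  then have "{y\<in>\<Omega>. u y > 0} \<noteq> {}" using closure_empty by force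
  then obtain y where "y \<in> \<Omega>" "u y > 0" by blast
  then have Z: "{z\<in>\<Omega>. u z = 0} \<noteq> {}"
    using zero_level_set_nonempty[OF assms(1,3,2,4,5) super cont] by blast
  have "1 / \<Lambda> \<le> infdist xb {z\<in>\<Omega>. u z = 0}"
    unfolding infdist_notempty[OF Z] using cone xb \<open>\<Lambda> > 0\<close> by (intro cINF_greatest[OF Z]) auto
  moreover have "closure {y\<in>\<Omega>. u y > 0} \<subseteq> closure \<Omega>" by (rule closure_mono) auto
  then have "bounded (closure {y\<in>\<Omega>. u y > 0})"
    using bounded_subset[OF bounded_closure[OF \<open>bounded \<Omega>\<close>]] by blast
  ultimately show ?thesis
    using cone SUP_infdist_lower_bound[OF _ Z xb_pos] by blast
qed

end
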